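(* In the high-dimensional setting below, assume $\epsilon_{I,j}\ne0$ for all $j$. If for some constant $c>1$ the penalty levels satisfy $$\lambda\gamma\ge\frac{c+1}{c-1}\max_{j\in[p]}\frac{\|(X^{(n)}_{I,j^c})^\top\epsilon_{I,j}\|_\infty}{\|\epsilon_{I,j}\|_2}\quad\text{and}\quad\lambda\ge\frac{c+1}{c-1}\max_{i\in[n]}\Big(\sum_{j\in[p]}\frac{\epsilon_{ij}^2}{\|\epsilon_{I,j}\|_2^2}\Big)^{1/2},$$ then $\widehat\Delta\in\mathscr C_{\mathcal J,O}(c,\gamma)$.
   Context: High-dimensional setting. Let $n,p\ge1$, $[n]=\{1,\dots,n\}$. $X=Y+E^*\in\mathbb R^{n\times p}$ where (C1) the rows of $Y$ are independent $\mathcal N_p(\mu^*,\Sigma^* )$, $\Sigma^*$ positive definite; (C2) $E^*$ is deterministic, $[n]=I\cup O$ a partition with the rows of $E^*$ indexed by $I$ equal to zero, and every row of $E^*(\Sigma^* )^{-1/2}$ of Euclidean norm at most $M_E\sqrt p$; $\mu^*=0$. $\Omega^*=(\Sigma^* )^{-1}$ with diagonal entries $\omega^*_{jj}$, $B^*=\Omega^*\mathrm{diag}(\Omega^* )^{-1}$, $X^{(n)}=X/\sqrt n$, $\Theta^*=E^*B^*/\sqrt n$, $\xi=X^{(n)}B^*-\Theta^*$, and $\epsilon\in\mathbb R^{n\times p}$ with $\epsilon_{ij}=\sqrt n(\omega^*_{jj})^{1/2}\xi_{ij}$. Notation: $A_{i,\bullet}$, $A_{\bullet,j}$ rows/columns,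 $A_{K,J}$ submatrices, $j^c=[p]\setminus\{j\}$, $\|A\|_{q_1,q_2}=(\sum_i\|A_{i,\bullet}\|_{q_1}^{q_2})^{1/q_2}$, $\|A^\top\|_{2,1}=\sum_j\|A_{\bullet,j}\|_2$. Estimator: for $\lambda,\gamma\ge0$, $(\widehat B,\widehat\Theta)$ minimizes $F(B,\Theta)=\|(X^{(n)}B-\Theta)^\top\|_{2,1}+\lambda(\|\Theta\|_{2,1}+\gamma\|B\|_{1,1})$ over $B\in\mathbb R^{p\times p}$ with all $B_{jj}=1$ and $\Theta\in\mathbb R^{n\times p}$. Let $\mathcal J=\{J_j:j\in[p]\}$, $J_j\subset[p]$, be such that $B^*_{i,j}=0$ whenever $i\notin J_j$; for a $p\times p$ matrix $A$, $A_{\mathcal J}$ is obtained by zeroing entries $A_{i,j}$ with $i\notin J_j$, and $A_{\mathcal J^c}=A-A_{\mathcal J}$. $\xi_O$ is the $n\times p$ matrix equal to $\xi$ on the rows indexed by $O$ and zero elsewhere; $\bar\Theta^*=\Theta^*+\xi_O$. $\widehat\Delta^B=\widehat B-B^*$, $\widehat\Delta^\Theta=\widehat\Theta-\bar\Theta^*$, and $\widehat\Delta\in\mathbb R^{(p+n)\times p}$ is the matrix obtained by stacking $\widehat\Delta^B$ above $\widehat\Delta^\Theta$. For $\Delta\in\mathbb R^{(p+n)\times p}$ write $\Delta^B=\Delta_{1:p,\bullet}$, $\Delta^\Theta=\Delta_{(p+1):(p+n),\bullet}$; cone: $\mathscr C_{\mathcal J,O}(c,\gamma)=\{\Delta:\gamma\|\Delta^B_{\mathcal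 J^c}\|_{1,1}+\|\Delta^\Theta_{O^c,\bullet}\|_{2,1}\le c(\gamma\|\Delta^B_{\mathcal J}\|_{1,1}+\|\Delta^\Theta_{O,\bullet}\|_{2,1})\}$, with $O^c=I$. *)

theory Defs
  imports "HOL-Analysis.Analysis"
begin

text \<open>Matrices are real^'c^'r (rows indexed by 'r, columns by 'c); A $ i $ j is entry (i,j).
  [n] is the finite type 'n, [p] the finite type 'p.\<close>

definition pos_def_mat :: "real^'p^'p \<Rightarrow> bool" where
  "pos_def_mat S \<longleftrightarrow> transpose S = S \<and> (\<forall>x. x \<noteq> 0 \<longrightarrow> x \<bullet> (S *v x) > 0)"

definition Xn :: "real^'p^'n \<Rightarrow> real^'p^'n" where
  "Xn X = (1 / sqrt (real CARD('n))) *\<^sub>R X"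

definition Omega :: "real^'p^'p \<Rightarrow> real^'p^'p" where
  "Omega S = matrix_inv S"

definition Bstar :: "real^'p^'p \<Rightarrow> real^'p^'p" where
  "Bstar S = Omega S ** (\<chi> i j. if i = j then 1 / (Omega S $ j $ j) else 0)"

definition Thetastar :: "real^'p^'p \<Rightarrow> real^'p^'n \<Rightarrow> real^'p^'n" where
  "Thetastar S E = (1 / sqrt (real CARD('n))) *\<^sub>R (E ** Bstar S)"

definition xi :: "real^'p^'p \<Rightarrow> real^'p^'n \<Rightarrow> real^'p^'n \<Rightarrow> real^'p^'n" where
  "xi S E X = Xn X ** Bstar S - Thetastar S E"

definition epsm :: "real^'p^'p \<Rightarrow> real^'p^'n \<Rightarrow> real^'p^'n \<Rightarrow> real^'p^'n" where
  "epsm S E X = (\<chi> i j. sqrt (real CARD('n)) * sqrt (Omega S $ j $ j) * xi S E X $ i $ j)"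

definition rows_restrict :: "'n set \<Rightarrow> real^'p^'n \<Rightarrow> real^'p^'n" where
  "rows_restrict Ob A = (\<chi> i. if i \<in> Ob then A $ i else 0)"

definition col_norm_on :: "'n set \<Rightarrow> real^'p^'n \<Rightarrow> 'p \<Rightarrow> real" where
  "col_norm_on I A j = sqrt (\<Sum>i\<in>I. (A $ i $ j)\<^sup>2)"

text \<open>|| (A_{I,j^c})^T v_{I,j} ||_infinity with v = the j-th column of V; max over the
  empty set (p = 1) is taken to be 0.\<close>
definition cross_sup :: "'n set \<Rightarrow> real^'p^'n \<Rightarrow> real^'p^'n \<Rightarrow> 'p \<Rightarrow> real" where
  "cross_sup I A V j = Max (insert 0 ((\<lambda>k. \<bar>\<Sum>i\<in>I. A $ i $ k * V $ i $ j\<bar>) ` (UNIV - {j})))"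

definition norm_T21 :: "real^'p^'n \<Rightarrow> real" where
  "norm_T21 A = (\<Sum>j\<in>UNIV. norm (column j A))"

definition norm21_on :: "'r set \<Rightarrow> real^'c^'r \<Rightarrow> real" where
  "norm21_on K A = (\<Sum>i\<in>K. norm (A $ i))"

definition norm11 :: "real^'c^'r \<Rightarrow> real" where
  "norm11 A = (\<Sum>i\<in>UNIV. \<Sum>j\<in>UNIV. \<bar>A $ i $ j\<bar>)"

definition objF :: "real \<Rightarrow> real \<Rightarrow> real^'p^'n \<Rightarrow> real^'p^'p \<Rightarrow> real^'p^'n \<Rightarrow> real" where
  "objF lam gam X B Th = norm_T21 (Xn X ** B - Th) + lam * (norm21_on UNIV Th + gam * norm11 B)"

definition is_estimator :: "real \<Rightarrow> real \<Rightarrow> real^'p^'n \<Rightarrow> real^'p^'p \<Rightarrow> real^'p^'n \<Rightarrow> bool" where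
  "is_estimator lam gam X Bh Thh \<longleftrightarrow> (\<forall>j. Bh $ j $ j = 1) \<and>
     (\<forall>B Th. (\<forall>j. B $ j $ j = 1) \<longrightarrow> objF lam gam X Bh Thh \<le> objF lam gam X B Th)"

definition restrJ :: "('p \<Rightarrow> 'p set) \<Rightarrow> real^'p^'p \<Rightarrow> real^'p^'p" where
  "restrJ J A = (\<chi> i j. if i \<in> J j then A $ i $ j else 0)"

definition restrJc :: "('p \<Rightarrow> 'p set) \<Rightarrow> real^'p^'p \<Rightarrow> real^'p^'p" where
  "restrJc J A = A - restrJ J A"

definition stack :: "real^'p::finite^'p \<Rightarrow> real^'p^'n::finite \<Rightarrow> real^'p^('p + 'n)" where
  "stack A C = (\<chi> r. case r of Inl i \<Rightarrow> A $ i | Inr i \<Rightarrow> C $ i)"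
definition DeltaB :: "real^'p::finite^('p + 'n::finite) \<Rightarrow> real^'p^'p" where
  "DeltaB D = (\<chi> i. D $ Inl i)"

definition DeltaTheta :: "real^'p::finite^('p + 'n::finite) \<Rightarrow> real^'p^'n" where
  "DeltaTheta D = (\<chi> i. D $ Inr i)"

definition cone :: "('p::finite \<Rightarrow> 'p set) \<Rightarrow> 'n set \<Rightarrow> real \<Rightarrow> real \<Rightarrow> (real^'p^('p + 'n::finite)) set" where
  "cone J Ob c gam = {D. gam * norm11 (restrJc J (DeltaB D)) + norm21_on (- Ob) (DeltaTheta D)
      \<le> c * (gam * norm11 (restrJ J (DeltaB D)) + norm21_on Ob (DeltaTheta D))}"

end

theory Submission
  imports Defs
begin

text \<open>Compare the objective at the estimator with its value at the truth
  \<open>(B*, \<Theta>* + \<xi>\<^sub>O)\<close>, whose residual is \<open>\<xi>\<close> on the inliers and zero on the outliers.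
  The data-fit term is bounded below by its subgradient inequality at the truth; the subgradient is the
  column-normalized residual, a column rescaling of \<open>\<epsilon>\<close>, and the two assumptions on
  \<open>\<lambda>\<gamma>\<close> and \<open>\<lambda>\<close> are exactly bounds on its dual norms
  (entrywise off the diagonal, and row-wise Euclidean). The penalties are decomposable over the
  support \<open>J\<close> of \<open>B*\<close> and over the inliers, so the basic inequality becomes
  a linear inequality between the four norms defining the cone, which rearranges to the cone
  condition since \<open>c > 1\<close>.\<close>

text \<open>Zero columns are mapped to zero, since \<open>x / 0 = 0\<close>.\<close>

definition normalize_columns :: "real^'c^'r \<Rightarrow> real^'c^'r" where
  "normalize_columns A = (\<chi> i j. A $ i $ j / norm (column j A))"

text \<open>The subgradient inequality of the Euclidean norm; at \<open>a = 0\<close> it holds because \<open>0 / 0 = 0\<close>.\<close>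

lemma norm_add_ge_inner_div_norm:
  fixes a d :: "'a::real_inner"
  shows "norm a + inner a d / norm a \<le> norm (a + d)"
proof (cases "a = 0")
  case False
  have "norm a ^ 2 + inner a d = inner a (a + d)"
    by (simp add: inner_add_right power2_norm_eq_inner)
  also have "\<dots> \<le> norm a * norm (a + d)" by (rule norm_cauchy_schwarz)
  finally show ?thesis using False by (simp add: field_simps power2_eq_square)
qed simp

lemma inner_normalize_columns:
  "normalize_columns A \<bullet> G = (\<Sum>j\<in>UNIV. column j A \<bullet> column j G / norm (column j A))"
  unfolding inner_vec_def normalize_columns_def column_def
  by (subst sum.swap) (simp add: sum_divide_distrib mult.commute)

lemma norm_T21_add_ge:
  "norm_T21 A + normalize_columns A \<bullet> G \<le> norm_T21 (A + G)"
proof -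
  have "column j (A + G) = column j A + column j G" for j
    by (simp add: column_def vec_eq_iff)
  then show ?thesis
    unfolding norm_T21_def inner_normalize_columns sum.distrib[symmetric]
    by (intro sum_mono) (simp add: norm_add_ge_inner_div_norm)
qed

lemma inner_matrix_mult_right:
  fixes W :: "real^'c^'r" and X :: "real^'k^'r" and D :: "real^'c^'k"
  shows "W \<bullet> (X ** D) = (transpose X ** W) \<bullet> D"
proof -
  have "W \<bullet> (X ** D) = (\<Sum>i\<in>UNIV. \<Sum>j\<in>UNIV. \<Sum>k\<in>UNIV. W $ i $ j * X $ i $ k * D $ k $ j)"
    by (simp add: inner_vec_def matrix_matrix_mult_def sum_distrib_left mult.assoc)
  also have "\<dots> = (\<Sum>i\<in>UNIV. \<Sum>k\<in>UNIV. \<Sum>j\<in>UNIV. W $ i $ j * X $ i $ k * D $ k $ j)"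
    by (intro sum.cong refl) (rule sum.swap)
  also have "\<dots> = (\<Sum>k\<in>UNIV. \<Sum>i\<in>UNIV. \<Sum>j\<in>UNIV. W $ i $ j * X $ i $ k * D $ k $ j)"
    by (rule sum.swap)
  also have "\<dots> = (\<Sum>k\<in>UNIV. \<Sum>j\<in>UNIV. \<Sum>i\<in>UNIV. W $ i $ j * X $ i $ k * D $ k $ j)"
    by (intro sum.cong refl) (rule sum.swap)
  also have "\<dots> = (transpose X ** W) \<bullet> D"
    by (simp add: inner_vec_def matrix_matrix_mult_def transpose_def sum_distrib_left ac_simps)
  finally show ?thesis .
qed

lemma abs_inner_le_norm11_offdiag:
  fixes M D :: "real^'p^'p"
  assumes "\<And>j. D $ j $ j = 0" and "\<And>k j. k \<noteq> j \<Longrightarrow> \<bar>M $ k $ j\<bar> \<le> m"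
  shows "\<bar>M \<bullet> D\<bar> \<le> m * norm11 D"
proof -
  have entry: "\<bar>M $ k $ j * D $ k $ j\<bar> \<le> m * \<bar>D $ k $ j\<bar>" for k j
    using assms by (cases "k = j") (auto simp: abs_mult intro: mult_right_mono)
  have "\<bar>M \<bullet> D\<bar> \<le> (\<Sum>k\<in>UNIV. \<Sum>j\<in>UNIV. \<bar>M $ k $ j * D $ k $ j\<bar>)"
    unfolding inner_vec_def inner_real_def
    by (rule order_trans[OF sum_abs]) (intro sum_mono sum_abs)
  also have "\<dots> \<le> (\<Sum>k\<in>UNIV. \<Sum>j\<in>UNIV. m * \<bar>D $ k $ j\<bar>)"
    by (intro sum_mono entry)
  also have "\<dots> = m * norm11 D"
    by (simp add: norm11_def sum_distrib_left)
  finally show ?thesis .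
qed

lemma abs_inner_le_norm21_on:
  fixes W T :: "real^'c^'r"
  assumes "\<And>i. i \<notin> K \<Longrightarrow> W $ i = 0" and "\<And>i. i \<in> K \<Longrightarrow> norm (W $ i) \<le> m"
  shows "\<bar>W \<bullet> T\<bar> \<le> m * norm21_on K T"
proof -
  have row: "\<bar>W $ i \<bullet> T $ i\<bar> \<le> (if i \<in> K then m * norm (T $ i) else 0)" for i
  proof (cases "i \<in> K")
    case True
    have "\<bar>W $ i \<bullet> T $ i\<bar> \<le> norm (W $ i) * norm (T $ i)" by (rule Cauchy_Schwarz_ineq2)
    also have "\<dots> \<le> m * norm (T $ i)" using assms(2)[OF True] by (simp add: mult_right_mono)
    finally show ?thesis using True by simp
  qed (simp add: assms(1))
  have "\<bar>W \<bullet> T\<bar> \<le> (\<Sum>i\<in>UNIV. if i \<in> K then m * norm (T $ i) else 0)"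
    unfolding inner_vec_def[of W T] by (rule order_trans[OF sum_abs]) (intro sum_mono row)
  also have "\<dots> = m * norm21_on K T"
    by (simp add: norm21_on_def sum.If_cases sum_distrib_left)
  finally show ?thesis .
qed

lemma norm11_nonneg: "norm11 A \<ge> 0"
  by (simp add: norm11_def sum_nonneg)

lemma norm21_on_nonneg: "norm21_on K A \<ge> 0"
  by (simp add: norm21_on_def sum_nonneg)

lemma norm11_restrJ_add_restrJc: "norm11 (restrJ J D) + norm11 (restrJc J D) = norm11 D"
proof -
  have "\<bar>restrJ J D $ i $ j\<bar> + \<bar>restrJc J D $ i $ j\<bar> = \<bar>D $ i $ j\<bar>" for i j
    by (simp add: restrJ_def restrJc_def)
  then show ?thesis by (simp add: norm11_def sum.distrib[symmetric])
qed

lemma norm11_add_ge: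
  assumes "\<And>i j. i \<notin> J j \<Longrightarrow> B $ i $ j = 0"
  shows "norm11 B + norm11 (restrJc J D) - norm11 (restrJ J D) \<le> norm11 (B + D)"
proof -
  have "\<bar>B $ i $ j\<bar> + \<bar>restrJc J D $ i $ j\<bar> - \<bar>restrJ J D $ i $ j\<bar> \<le> \<bar>(B + D) $ i $ j\<bar>" for i j
    using assms[of i j] by (cases "i \<in> J j") (auto simp: restrJ_def restrJc_def)
  then have "(\<Sum>i\<in>UNIV. \<Sum>j\<in>UNIV. \<bar>B $ i $ j\<bar> + \<bar>restrJc J D $ i $ j\<bar> - \<bar>restrJ J D $ i $ j\<bar>) \<le> norm11 (B + D)"
    unfolding norm11_def by (intro sum_mono)
  then show ?thesis by (simp add: norm11_def sum.distrib sum_subtractf)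
qed

lemma norm21_add_ge:
  assumes "\<And>i. i \<in> K \<Longrightarrow> A $ i = 0"
  shows "norm21_on UNIV A + norm21_on K T - norm21_on (- K) T \<le> norm21_on UNIV (A + T)"
proof -
  have "norm (A $ i) + (if i \<in> K then norm (T $ i) else - norm (T $ i)) \<le> norm ((A + T) $ i)" for i
    using assms[of i] norm_triangle_ineq2[of "A $ i" "- T $ i"] by auto
  then have "(\<Sum>i\<in>UNIV. norm (A $ i) + (if i \<in> K then norm (T $ i) else - norm (T $ i)))
      \<le> norm21_on UNIV (A + T)"
    unfolding norm21_on_def by (intro sum_mono)
  then show ?thesis
    by (simp add: norm21_on_def sum.distrib sum.If_cases sum_negf Compl_eq_Diff_UNIV)
qed

lemma basic_inequality:
  fixes X Th0 Thh :: "real^'p^'n" and B0 Bh :: "real^'p^'p"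
  defines "R \<equiv> Xn X ** B0 - Th0"
  assumes est: "is_estimator lam gam X Bh Thh"
    and B0_diag: "\<And>j. B0 $ j $ j = 1"
    and B0_supp: "\<And>i j. i \<notin> J j \<Longrightarrow> B0 $ i $ j = 0"
    and Th0_K: "\<And>i. i \<in> K \<Longrightarrow> Th0 $ i = 0"
    and R_K: "\<And>i. i \<notin> K \<Longrightarrow> R $ i = 0"
    and mu1: "\<And>k j. k \<noteq> j \<Longrightarrow> \<bar>(transpose (Xn X) ** normalize_columns R) $ k $ j\<bar> \<le> mu1"
    and mu2: "\<And>i. i \<in> K \<Longrightarrow> norm (normalize_columns R $ i) \<le> mu2"
    and lam: "lam \<ge> 0" and gam: "gam \<ge> 0"
  shows "lam * gam * (norm11 (restrJc J (Bh - B0)) - norm11 (restrJ J (Bh - B0)))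
           + lam * (norm21_on K (Thh - Th0) - norm21_on (- K) (Thh - Th0))
         \<le> mu1 * (norm11 (restrJ J (Bh - B0)) + norm11 (restrJc J (Bh - B0)))
           + mu2 * norm21_on K (Thh - Th0)"
proof -
  define D where "D = Bh - B0"
  define T where "T = Thh - Th0"
  define W where "W = normalize_columns R"
  have D_diag: "\<And>j. D $ j $ j = 0"
    using est B0_diag by (simp add: is_estimator_def D_def)
  have W_K: "\<And>i. i \<notin> K \<Longrightarrow> W $ i = 0"
    using R_K by (simp add: W_def normalize_columns_def vec_eq_iff)
  have "Bh = B0 + D" and "Thh = Th0 + T" by (simp_all add: D_def T_def)
  then have split: "Xn X ** Bh - Thh = R + (Xn X ** D - T)"
    by (simp add: R_def matrix_add_ldistrib)
  have "W \<bullet> (Xn X ** D - T) = (transpose (Xn X) ** W) \<bullet> D - W \<bullet> T"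
    by (simp add: inner_diff_right inner_matrix_mult_right)
  moreover have "\<bar>(transpose (Xn X) ** W) \<bullet> D\<bar> \<le> mu1 * norm11 D"
    using D_diag mu1 unfolding W_def by (rule abs_inner_le_norm11_offdiag)
  moreover have "\<bar>W \<bullet> T\<bar> \<le> mu2 * norm21_on K T"
    using W_K mu2 unfolding W_def by (rule abs_inner_le_norm21_on)
  ultimately have fit: "norm_T21 R - mu1 * norm11 D - mu2 * norm21_on K T \<le> norm_T21 (Xn X ** Bh - Thh)"
    using norm_T21_add_ge[of R "Xn X ** D - T"] unfolding W_def split by linarith
  have pen_Theta: "lam * norm21_on UNIV Th0 + lam * norm21_on K T - lam * norm21_on (- K) T
      \<le> lam * norm21_on UNIV Thh"
    using mult_left_mono[OF norm21_add_ge[of K Th0 T, OF Th0_K] lam]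
    unfolding \<open>Thh = Th0 + T\<close> right_diff_distrib distrib_left .
  have pen_B: "lam * (gam * norm11 B0) + lam * (gam * norm11 (restrJc J D)) - lam * (gam * norm11 (restrJ J D))
      \<le> lam * (gam * norm11 Bh)"
    using mult_left_mono[OF mult_left_mono[OF norm11_add_ge[of J B0 D, OF B0_supp] gam] lam]
    unfolding \<open>Bh = B0 + D\<close> right_diff_distrib distrib_left .
  have "objF lam gam X Bh Thh \<le> objF lam gam X B0 Th0"
    using est B0_diag by (simp add: is_estimator_def)
  then have opt: "norm_T21 (Xn X ** Bh - Thh) + lam * norm21_on UNIV Thh + lam * (gam * norm11 Bh)
      \<le> norm_T21 R + lam * norm21_on UNIV Th0 + lam * (gam * norm11 B0)"
    unfolding objF_def R_def distrib_left by linarith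
  have "mu1 * norm11 D = mu1 * norm11 (restrJ J D) + mu1 * norm11 (restrJc J D)"
    unfolding norm11_restrJ_add_restrJc[of J D, symmetric] by (simp add: distrib_left)
  with fit pen_Theta pen_B opt
  have "lam * (gam * norm11 (restrJc J D)) - lam * (gam * norm11 (restrJ J D))
      + (lam * norm21_on K T - lam * norm21_on (- K) T)
      \<le> mu1 * norm11 (restrJ J D) + mu1 * norm11 (restrJc J D) + mu2 * norm21_on K T"
    by linarith
  then show ?thesis
    unfolding D_def T_def by (simp only: right_diff_distrib distrib_left mult.assoc)
qed

lemma cone_of_basic_inequality:
  fixes lam gam c mu1 mu2 a b s t :: real
  assumes c: "c > 1" and mu2: "mu2 > 0"
    and lam_gam: "(c + 1) / (c - 1) * mu1 \<le> lam * gam"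
    and lam: "(c + 1) / (c - 1) * mu2 \<le> lam"
    and nonneg: "a \<ge> 0" "b \<ge> 0" "s \<ge> 0" "t \<ge> 0"
    and basic: "lam * gam * (a - b) + lam * (s - t) \<le> mu1 * (b + a) + mu2 * s"
  shows "gam * a + s \<le> c * (gam * b + t)"
proof -
  have c1: "c - 1 > 0" using c by simp
  have mu1': "(c + 1) * mu1 \<le> (c - 1) * (lam * gam)"
    using lam_gam c1 by (simp add: pos_divide_le_eq mult.commute)
  have mu2': "(c + 1) * mu2 \<le> (c - 1) * lam"
    using lam c1 by (simp add: pos_divide_le_eq mult.commute)
  have "0 < (c + 1) * mu2" using c mu2 by simp
  with mu2' have "0 < (c - 1) * lam" by linarith
  then have lam_pos: "lam > 0" using c1 by (simp add: zero_less_mult_iff)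
  have "(c + 1) * (lam * gam * (a - b) + lam * (s - t)) \<le> (c + 1) * (mu1 * (b + a) + mu2 * s)"
    using basic c by (simp add: mult_left_mono)
  also have "\<dots> = (c + 1) * mu1 * (b + a) + (c + 1) * mu2 * s"
    by (simp add: algebra_simps)
  also have "\<dots> \<le> (c - 1) * (lam * gam) * (b + a) + (c - 1) * lam * s"
    using mu1' mu2' nonneg by (intro add_mono mult_right_mono) auto
  finally have "2 * (lam * (gam * a + s)) + (c - 1) * (lam * t) \<le> 2 * (lam * (c * (gam * b + t)))"
    by (simp add: algebra_simps)
  moreover have "(c - 1) * (lam * t) \<ge> 0" using c1 lam_pos nonneg by simp
  ultimately have "lam * (gam * a + s) \<le> lam * (c * (gam * b + t))" by linarith
  then show ?thesis using lam_pos by simp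
qed

lemma rows_restrict_nth [simp]:
  "rows_restrict I V $ i $ j = (if i \<in> I then V $ i $ j else 0)"
  by (simp add: rows_restrict_def)

lemma col_norm_on_pos:
  assumes "i \<in> I" and "V $ i $ j \<noteq> 0"
  shows "col_norm_on I V j > 0"
proof -
  have "0 < (V $ i $ j)\<^sup>2" using assms(2) by simp
  also have "\<dots> \<le> (\<Sum>i\<in>I. (V $ i $ j)\<^sup>2)"
    using assms(1) by (intro member_le_sum) auto
  finally show ?thesis by (simp add: col_norm_on_def)
qed

lemma col_norm_on_scale:
  assumes "\<And>i. W $ i $ j = a * V $ i $ j"
  shows "col_norm_on I W j = \<bar>a\<bar> * col_norm_on I V j"
  by (simp add: assms col_norm_on_def power_mult_distrib sum_distrib_left[symmetric] real_sqrt_mult)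

lemma cross_sup_scale:
  assumes "\<And>i. W $ i $ j = a * V $ i $ j"
  shows "cross_sup I A W j = \<bar>a\<bar> * cross_sup I A V j"
proof -
  define S where "S = (\<lambda>k. \<bar>\<Sum>i\<in>I. A $ i $ k * V $ i $ j\<bar>) ` (UNIV - {j})"
  have "(\<lambda>k. \<bar>\<Sum>i\<in>I. A $ i $ k * W $ i $ j\<bar>) ` (UNIV - {j}) = (\<lambda>x. \<bar>a\<bar> * x) ` S"
    unfolding S_def image_image
    by (intro image_cong refl) (simp add: assms sum_distrib_left[symmetric] abs_mult ac_simps)
  then have "cross_sup I A W j = Max ((\<lambda>x. \<bar>a\<bar> * x) ` insert 0 S)"
    by (simp add: cross_sup_def)
  also have "\<dots> = \<bar>a\<bar> * Max (insert 0 S)"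
    by (rule mono_Max_commute[symmetric]) (auto simp: mono_def mult_left_mono S_def)
  finally show ?thesis by (simp add: cross_sup_def S_def)
qed

lemma normalize_columns_rows_restrict:
  "normalize_columns (rows_restrict I V) $ i $ j = (if i \<in> I then V $ i $ j / col_norm_on I V j else 0)"
proof -
  have "(\<Sum>i\<in>UNIV. (rows_restrict I V $ i $ j)\<^sup>2) = (\<Sum>i\<in>I. (V $ i $ j)\<^sup>2)"
    by (simp add: if_distrib[of "\<lambda>x. x\<^sup>2"] sum.If_cases cong: if_cong)
  then have "norm (column j (rows_restrict I V)) = col_norm_on I V j"
    by (simp add: norm_vec_def L2_set_def column_def col_norm_on_def)
  then show ?thesis by (simp add: normalize_columns_def)
qed

lemma abs_transpose_mult_normalize_columns_le:
  assumes "k \<noteq> j"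
  shows "\<bar>(transpose A ** normalize_columns (rows_restrict I V)) $ k $ j\<bar>
    \<le> cross_sup I A V j / col_norm_on I V j"
proof -
  have "(transpose A ** normalize_columns (rows_restrict I V)) $ k $ j
      = (\<Sum>i\<in>I. A $ i $ k * V $ i $ j) / col_norm_on I V j"
    by (simp add: matrix_matrix_mult_def transpose_def normalize_columns_rows_restrict
        if_distrib sum.If_cases sum_divide_distrib cong: if_cong)
  moreover have "\<bar>\<Sum>i\<in>I. A $ i $ k * V $ i $ j\<bar> \<le> cross_sup I A V j"
    unfolding cross_sup_def using assms by (intro Max_ge) auto
  moreover have "col_norm_on I V j \<ge> 0" by (simp add: col_norm_on_def sum_nonneg)
  ultimately show ?thesis
    by (simp add: abs_divide divide_right_mono)
qed

lemma norm_row_normalize_columns: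
  assumes "i \<in> I"
  shows "norm (normalize_columns (rows_restrict I V) $ i)
    = sqrt (\<Sum>j\<in>UNIV. (V $ i $ j)\<^sup>2 / (col_norm_on I V j)\<^sup>2)"
  using assms by (simp add: norm_vec_def L2_set_def normalize_columns_rows_restrict power_divide)

lemma abs_transpose_mult_normalize_columns_le_Max:
  assumes scale: "\<And>i j. W $ i $ j = a j * V $ i $ j" and a: "\<And>j. a j \<noteq> 0" and "k \<noteq> j"
  shows "\<bar>(transpose A ** normalize_columns (rows_restrict I V)) $ k $ j\<bar>
    \<le> Max (range (\<lambda>j. cross_sup I A W j / col_norm_on I W j))"
proof -
  have "cross_sup I A W j / col_norm_on I W j = cross_sup I A V j / col_norm_on I V j"
    using a[of j] by (simp add: cross_sup_scale[OF scale] col_norm_on_scale[OF scale])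
  also have "\<dots> \<ge> \<bar>(transpose A ** normalize_columns (rows_restrict I V)) $ k $ j\<bar>"
    using \<open>k \<noteq> j\<close> by (rule abs_transpose_mult_normalize_columns_le)
  finally show ?thesis by (rule order_trans) (intro Max_ge; simp)
qed

lemma norm_row_normalize_columns_le_Max:
  assumes scale: "\<And>i j. W $ i $ j = a j * V $ i $ j" and a: "\<And>j. a j \<noteq> 0" and "i \<in> I"
  shows "norm (normalize_columns (rows_restrict I V) $ i)
    \<le> Max (range (\<lambda>i. sqrt (\<Sum>j\<in>UNIV. (W $ i $ j)\<^sup>2 / (col_norm_on I W j)\<^sup>2)))"
proof -
  have "(W $ i $ j)\<^sup>2 / (col_norm_on I W j)\<^sup>2 = (V $ i $ j)\<^sup>2 / (col_norm_on I V j)\<^sup>2" for j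
    using a[of j] by (simp add: scale col_norm_on_scale[OF scale] power_mult_distrib)
  then have "norm (normalize_columns (rows_restrict I V) $ i)
      = sqrt (\<Sum>j\<in>UNIV. (W $ i $ j)\<^sup>2 / (col_norm_on I W j)\<^sup>2)"
    using \<open>i \<in> I\<close> by (simp add: norm_row_normalize_columns)
  then show ?thesis by (simp add: Max_ge)
qed

lemma Max_sqrt_sum_sq_div_col_norm_on_pos:
  assumes "i \<in> I" and "V $ i $ j \<noteq> 0"
  shows "0 < Max (range (\<lambda>i. sqrt (\<Sum>j\<in>UNIV. (V $ i $ j)\<^sup>2 / (col_norm_on I V j)\<^sup>2)))"
proof -
  have "0 < (V $ i $ j)\<^sup>2 / (col_norm_on I V j)\<^sup>2"
    using assms col_norm_on_pos[OF assms] by simp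
  also have "\<dots> \<le> (\<Sum>j\<in>UNIV. (V $ i $ j)\<^sup>2 / (col_norm_on I V j)\<^sup>2)"
    by (intro member_le_sum) auto
  finally have "0 < sqrt (\<Sum>j\<in>UNIV. (V $ i $ j)\<^sup>2 / (col_norm_on I V j)\<^sup>2)" by simp
  also have "\<dots> \<le> Max (range (\<lambda>i. sqrt (\<Sum>j\<in>UNIV. (V $ i $ j)\<^sup>2 / (col_norm_on I V j)\<^sup>2)))"
    by (intro Max_ge) auto
  finally show ?thesis .
qed

lemma Bstar_diag:
  assumes "Omega S $ j $ j \<noteq> 0"
  shows "Bstar S $ j $ j = 1"
  using assms by (simp add: Bstar_def matrix_matrix_mult_def if_distrib cong: if_cong)

lemma Thetastar_row_zero:
  assumes "E $ i = 0"
  shows "Thetastar S E $ i = 0"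
  using assms by (simp add: Thetastar_def matrix_matrix_mult_def vec_eq_iff)

lemma DeltaB_stack [simp]: "DeltaB (stack A C) = A"
  by (simp add: DeltaB_def stack_def vec_eq_iff)

lemma DeltaTheta_stack [simp]: "DeltaTheta (stack A C) = C"
  by (simp add: DeltaTheta_def stack_def vec_eq_iff)

theorem mainTheorem16:
  fixes Y E :: "real^'p^'n" and Sigma :: "real^'p^'p"
    and I Ob :: "'n set" and J :: "'p \<Rightarrow> 'p set"
    and ME lam gam c :: real and Bh :: "real^'p^'p" and Thh :: "real^'p^'n"
  assumes Sigma_pd: "pos_def_mat Sigma"
    and partition: "I \<inter> Ob = {}" "I \<union> Ob = UNIV"
    and E_inliers: "\<forall>i\<in>I. E $ i = 0"
    and E_bound: "\<forall>i. sqrt (E $ i \<bullet> (Omega Sigma *v (E $ i))) \<le> ME * sqrt (real CARD('p))"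
    and J_supp: "\<forall>i j. i \<notin> J j \<longrightarrow> Bstar Sigma $ i $ j = 0"
    and eps_nz: "\<forall>j. \<exists>i\<in>I. epsm Sigma E (Y + E) $ i $ j \<noteq> 0"
    and lam_nn: "lam \<ge> 0" and gam_nn: "gam \<ge> 0"
    and c_gt: "c > 1"
    and lam_gam: "lam * gam \<ge> (c + 1) / (c - 1) *
        Max (range (\<lambda>j. cross_sup I (Xn (Y + E)) (epsm Sigma E (Y + E)) j
                        / col_norm_on I (epsm Sigma E (Y + E)) j))"
    and lam_ge: "lam \<ge> (c + 1) / (c - 1) *
        Max (range (\<lambda>i. sqrt (\<Sum>j\<in>UNIV. (epsm Sigma E (Y + E) $ i $ j)\<^sup>2
                        / (col_norm_on I (epsm Sigma E (Y + E)) j)\<^sup>2)))"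
    and est: "is_estimator lam gam (Y + E) Bh Thh"
  shows "stack (Bh - Bstar Sigma)
           (Thh - (Thetastar Sigma E + rows_restrict Ob (xi Sigma E (Y + E))))
         \<in> cone J Ob c gam"
proof -
  define a where "a j = sqrt (real CARD('n)) * sqrt (Omega Sigma $ j $ j)" for j
  define xs where "xs = xi Sigma E (Y + E)"
  define Th0 where "Th0 = Thetastar Sigma E + rows_restrict Ob xs"
  have scale: "epsm Sigma E (Y + E) $ i $ j = a j * xs $ i $ j" for i j
    by (simp add: epsm_def a_def xs_def)
  have a_nz: "a j \<noteq> 0" for j
    using eps_nz scale by (metis mult_zero_left)
  have compl: "- I = Ob" "- Ob = I" using partition by auto
  have resid: "Xn (Y + E) ** Bstar Sigma - Th0 = rows_restrict I xs"
    using compl by (auto simp: Th0_def xs_def xi_def vec_eq_iff)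
  have Th0_I: "Th0 $ i = 0" if "i \<in> I" for i
    using that E_inliers compl by (auto simp: Th0_def Thetastar_row_zero vec_eq_iff)
  have B_diag: "Bstar Sigma $ j $ j = 1" for j
    using a_nz[of j] by (intro Bstar_diag) (auto simp: a_def)
  obtain i0 j0 where "i0 \<in> I" "epsm Sigma E (Y + E) $ i0 $ j0 \<noteq> 0" using eps_nz by blast
  note mu2_pos = Max_sqrt_sum_sq_div_col_norm_on_pos[OF this]
  define D where "D = Bh - Bstar Sigma"
  define T where "T = Thh - Th0"
  define mu1 where "mu1 = Max (range (\<lambda>j. cross_sup I (Xn (Y + E)) (epsm Sigma E (Y + E)) j
    / col_norm_on I (epsm Sigma E (Y + E)) j))"
  define mu2 where "mu2 = Max (range (\<lambda>i. sqrt (\<Sum>j\<in>UNIV. (epsm Sigma E (Y + E) $ i $ j)\<^sup>2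
    / (col_norm_on I (epsm Sigma E (Y + E)) j)\<^sup>2)))"
  have "lam * gam * (norm11 (restrJc J D) - norm11 (restrJ J D)) + lam * (norm21_on I T - norm21_on (- I) T)
    \<le> mu1 * (norm11 (restrJ J D) + norm11 (restrJc J D)) + mu2 * norm21_on I T"
    unfolding D_def T_def mu1_def mu2_def
  proof (rule basic_inequality[OF est])
    show "(Xn (Y + E) ** Bstar Sigma - Th0) $ i = 0" if "i \<notin> I" for i
      using that by (simp add: resid vec_eq_iff)
  qed (simp_all add: B_diag J_supp Th0_I lam_nn gam_nn resid
      abs_transpose_mult_normalize_columns_le_Max[OF scale a_nz]
      norm_row_normalize_columns_le_Max[OF scale a_nz])
  then have "gam * norm11 (restrJc J D) + norm21_on I T \<le> c * (gam * norm11 (restrJ J D) + norm21_on (- I) T)"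
    using c_gt mu2_pos lam_gam lam_ge unfolding mu1_def mu2_def
    by (intro cone_of_basic_inequality) (auto simp: norm11_nonneg norm21_on_nonneg)
  then show ?thesis
    by (simp add: cone_def compl D_def T_def Th0_def xs_def)
qed

end
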